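(* Let $g\in\mathbf{Sp}(2n,\mathbb Z)$ and $m\ge1$. (1) If $g\in\Gamma(m)$ then $\tau(g)g^{-1}\in\Gamma(2m)$. (2) If $g\in\Gamma(2m)$ then $\tau(g)g\in\Gamma(4m)$. (3) If $\tau(g)g^{-1}\in\Gamma(4m)$ then $g=\beta u$ for some $\beta\in\Gamma_{2m}(2)$ and some $u\in\mathbf{GL}(n,\mathbb Z)$.
   Context: $\mathbf{Sp}(2n,\mathbb Z)$: integral matrices $g=\begin{pmatrix}A&B\\C&D\end{pmatrix}$ with ${}^tgJg=J$, $J=\begin{pmatrix}0&I\\-I&0\end{pmatrix}$. $\tau\begin{pmatrix}A&B\\C&D\end{pmatrix}=\begin{pmatrix}A&-B\\-C&D\end{pmatrix}$. $\Gamma(N)=\{\gamma\in\mathbf{Sp}(2n,\mathbb Z):\gamma\equiv I\bmod N\}$ (so $\Gamma(1)=\mathbf{Sp}(2n,\mathbb Z)$). $\Gamma_{2m}(2)=\{\begin{pmatrix}A&B\\C&D\end{pmatrix}\in\mathbf{Sp}(2n,\mathbb Z):A,D\equiv I\bmod2,\ B,C\equiv0\bmod2m\}$. $\mathbf{GL}(n,\mathbb Z)$ is embedded in $\mathbf{Sp}(2n,\mathbb Z)$ via $U\mapsto\mathrm{diag}(U,{}^tU^{-1})$. *)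

theory Defs
  imports "HOL-Analysis.Analysis" "HOL-Number_Theory.Cong"
begin

(* 2n x 2n integer matrices are indexed by the type 'n + 'n:
   Inl i = first block of coordinates, Inr i = second block.
   Blocks: A = (Inl,Inl), B = (Inl,Inr), C = (Inr,Inl), D = (Inr,Inr). *)
type_synonym 'n smat = "int ^ ('n + 'n) ^ ('n + 'n)"

definition Jmat :: "'n::finite smat" where
  "Jmat = (\<chi> i j. case (i, j) of
      (Inl a, Inr b) \<Rightarrow> (if a = b then 1 else 0)
    | (Inr a, Inl b) \<Rightarrow> (if a = b then -1 else 0)
    | _ \<Rightarrow> 0)"

definition Sp :: "'n::finite smat set" where
  "Sp = {g. transpose g ** Jmat ** g = Jmat}"

definition tau :: "'n::finite smat \<Rightarrow> 'n smat" where
  "tau g = (\<chi> i j. if isl i = isl j then g $ i $ j else - (g $ i $ j))"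

definition Gamma :: "int \<Rightarrow> 'n::finite smat set" where
  "Gamma N = {g \<in> Sp. \<forall>i j. [g $ i $ j = (mat 1 :: 'n smat) $ i $ j] (mod N)}"

definition Gamma2 :: "int \<Rightarrow> 'n::finite smat set" where
  "Gamma2 m = {g \<in> Sp. \<forall>i j.
      (isl i = isl j \<longrightarrow> [g $ i $ j = (mat 1 :: 'n smat) $ i $ j] (mod 2)) \<and>
      (isl i \<noteq> isl j \<longrightarrow> [g $ i $ j = 0] (mod (2 * m)))}"

definition GLZ :: "(int ^ 'n ^ 'n) set" where
  "GLZ = {U. invertible U}"

definition embGL :: "int ^ 'n::finite ^ 'n \<Rightarrow> 'n smat" where
  "embGL U = (\<chi> i j. case (i, j) of
      (Inl a, Inl b) \<Rightarrow> U $ a $ b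
    | (Inr a, Inr b) \<Rightarrow> transpose (matrix_inv U) $ a $ b
    | _ \<Rightarrow> 0)"

end

(*
  Since tau g = g - 2 (0 B; C 0) for g = (A B; C D), the congruence tau g = g (mod 2N) holds
  exactly when N divides the off-diagonal blocks B and C.  Parts (1) and (2) follow by
  multiplying this congruence by g^-1 resp. g, using g^2 = 1 (mod 4m) for g = 1 (mod 2m).
  In part (3), multiplying by g shows 2m | B, C; hence g is block diagonal modulo 2 and the
  symplectic relation D^t A - B^t C = 1 makes A invertible modulo 2.  Gaussian elimination over
  F_2 by integral transvections lifts A mod 2 to some u in GL(n,Z), and then
  beta = g diag(u^-1, u^t) lies in Gamma_2m(2).
*)
theory Submission
  imports Defs
begin

lemma matrix_add_rdistrib: "(A + B) ** C = A ** C + B ** (C :: 'a::semiring_1^_^_)"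
  by (simp add: matrix_matrix_mult_def vec_eq_iff sum.distrib distrib_right)

lemma matrix_mul_uminus_left [simp]: "(- A) ** B = - (A ** B :: 'a::ring_1^_^_)"
  by (simp add: matrix_matrix_mult_def vec_eq_iff sum_negf)

lemma matrix_mul_uminus_right [simp]: "A ** (- B) = - (A ** B :: 'a::ring_1^_^_)"
  by (simp add: matrix_matrix_mult_def vec_eq_iff sum_negf)

lemma transpose_zero [simp]: "transpose 0 = 0"
  by (simp add: transpose_def vec_eq_iff)

lemma transpose_uminus [simp]: "transpose (- A) = - transpose A"
  by (simp add: transpose_def vec_eq_iff)

lemma matrix_inv_right: "invertible A \<Longrightarrow> A ** matrix_inv A = mat 1"
  and matrix_inv_left: "invertible A \<Longrightarrow> matrix_inv A ** A = mat 1"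
  unfolding invertible_def matrix_inv_def by (metis (mono_tags, lifting) someI_ex)+

lemma invertible_matrix_inv: "invertible A \<Longrightarrow> invertible (matrix_inv A)"
  using matrix_inv_left matrix_inv_right invertible_def by blast

lemma int_matrix_left_right_inverse:
  fixes A B :: "int^'n^'n"
  assumes "A ** B = mat 1"
  shows "B ** A = mat 1"
proof -
  define re :: "int^'n^'n \<Rightarrow> real^'n^'n" where "re M = (\<chi> i j. of_int (M$i$j))" for M
  have re_mult: "re (M ** N) = re M ** re N" for M N
    by (simp add: re_def matrix_matrix_mult_def vec_eq_iff)
  have re_one: "re (mat 1) = mat 1"
    by (simp add: re_def mat_def vec_eq_iff)
  have "re A ** re B = mat 1"
    using assms by (metis re_mult re_one)
  then have "re (B ** A) = re (mat 1)"
    by (simp add: re_mult re_one matrix_left_right_inverse)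
  then show ?thesis
    by (simp add: re_def vec_eq_iff)
qed

lemma invertible_int_matrix_iff: "invertible (A :: int^'n^'n) \<longleftrightarrow> (\<exists>B. B ** A = mat 1)"
  using int_matrix_left_right_inverse invertible_def by blast

definition mat_cong :: "int \<Rightarrow> int^'n^'m \<Rightarrow> int^'n^'m \<Rightarrow> bool" where
  "mat_cong N A B \<longleftrightarrow> (\<forall>i j. [A$i$j = B$i$j] (mod N))"

lemma mat_cong_0_iff: "mat_cong N A 0 \<longleftrightarrow> (\<forall>i j. N dvd A$i$j)"
  by (simp add: mat_cong_def cong_0_iff)

lemma mat_cong_refl [simp]: "mat_cong N A A"
  by (simp add: mat_cong_def)

lemma mat_cong_sym: "mat_cong N A B \<Longrightarrow> mat_cong N B A"
  by (simp add: mat_cong_def cong_sym)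

lemma mat_cong_trans [trans]: "mat_cong N A B \<Longrightarrow> mat_cong N B C \<Longrightarrow> mat_cong N A C"
  unfolding mat_cong_def by (metis cong_trans)

lemma mat_cong_add: "mat_cong N A A' \<Longrightarrow> mat_cong N B B' \<Longrightarrow> mat_cong N (A + B) (A' + B')"
  by (simp add: mat_cong_def cong_add)

lemma mat_cong_diff: "mat_cong N A A' \<Longrightarrow> mat_cong N B B' \<Longrightarrow> mat_cong N (A - B) (A' - B')"
  by (simp add: mat_cong_def cong_diff)

lemma mat_cong_mult:
  "mat_cong N A A' \<Longrightarrow> mat_cong N B B' \<Longrightarrow> mat_cong N (A ** B) (A' ** B')"
  unfolding mat_cong_def matrix_matrix_mult_def by (auto intro!: cong_sum cong_mult)

lemma mat_cong_transpose: "mat_cong N (transpose A) (transpose B) \<longleftrightarrow> mat_cong N A B"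
  by (auto simp: mat_cong_def transpose_def)

lemma mat_cong_dvd_modulus: "mat_cong N A B \<Longrightarrow> M dvd N \<Longrightarrow> mat_cong M A B"
  unfolding mat_cong_def using cong_dvd_modulus by blast

lemma mat_cong_0_mult:
  assumes "mat_cong M A 0" "mat_cong N B 0"
  shows "mat_cong (M * N) (A ** B) 0"
  using assms unfolding mat_cong_0_iff matrix_matrix_mult_def
  by (auto intro!: dvd_sum mult_dvd_mono)

lemma mat_cong_uminus_self_iff: "mat_cong (2 * N) (- A) A \<longleftrightarrow> mat_cong N A 0"
  unfolding mat_cong_0_iff mat_cong_def cong_iff_dvd_diff by simp

section \<open>Lifting invertible matrices modulo 2\<close>

definition transvection :: "('n \<Rightarrow> int) \<Rightarrow> 'n \<Rightarrow> int^'n^'n" where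
  "transvection c l = mat 1 + (\<chi> i j. if j = l then c i else 0)"

lemma transvection_mult_nth:
  "(transvection c l ** A) $ i $ j = A$i$j + c i * A$l$j"
  unfolding transvection_def matrix_add_rdistrib matrix_mul_lid
  by (simp add: matrix_matrix_mult_def if_distrib[of "\<lambda>x. x * y" for y] cong: if_cong)

lemma invertible_transvection:
  assumes "c l = 0"
  shows "invertible (transvection c l)"
proof -
  have inverse: "transvection (\<lambda>i. - d i) l ** transvection d l = mat 1" if "d l = 0" for d
    using that by (auto simp: vec_eq_iff transvection_mult_nth)
      (auto simp: transvection_def mat_def)
  show ?thesis
    unfolding invertible_def using inverse[of c] inverse[of "\<lambda>i. - c i"] assms by auto
qed

definition unit_column_mod2 :: "int^'n^'n \<Rightarrow> 'n \<Rightarrow> bool" where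
  "unit_column_mod2 A j \<longleftrightarrow> odd (A$j$j) \<and> (\<forall>i. i \<noteq> j \<longrightarrow> even (A$i$j))"

lemma mat_cong_2_one_iff_unit_columns: "mat_cong 2 A (mat 1) \<longleftrightarrow> (\<forall>j. unit_column_mod2 A j)"
  by (auto simp: mat_cong_def unit_column_mod2_def mat_def cong_iff_dvd_diff)

(* Outside S the columns of A are unit vectors mod 2, so there row k of D is even; if column k
   of A were even on S as well, (D A)_kk would be even. *)
lemma exists_odd_pivot_mod2:
  assumes DA: "mat_cong 2 (D ** A) (mat 1)"
    and unit: "\<And>j. j \<notin> S \<Longrightarrow> unit_column_mod2 A j" and k: "k \<in> S"
  shows "\<exists>l\<in>S. odd (A$l$k)"
proof (rule ccontr)
  assume "\<not> ?thesis"
  then have even_column: "even (A$l$k)" if "l \<in> S" for l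
    using that by blast
  have even_row: "even (D$k$l)" if "l \<notin> S" for l
  proof -
    have "[(D ** A)$k$l = (\<Sum>p\<in>UNIV. D$k$p * (mat 1 :: int^_^_)$p$l)] (mod 2)"
      unfolding matrix_matrix_mult_def vec_lambda_beta
      using unit[OF that] by (intro cong_sum cong_mult)
        (auto simp: mat_def unit_column_mod2_def cong_iff_dvd_diff)
    moreover have "[(D ** A)$k$l = 0] (mod 2)"
      using DA[unfolded mat_cong_def, rule_format, of k l] k that
      by (auto simp: mat_def split: if_splits)
    ultimately show ?thesis
      by (simp add: mat_def cong_iff_dvd_diff if_distrib[of "\<lambda>x. y * x" for y] cong: if_cong)
  qed
  have "even ((D ** A)$k$k)"
    unfolding matrix_matrix_mult_def vec_lambda_beta
  proof (rule dvd_sum)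
    show "even (D$k$p * A$p$k)" for p
      using even_column[of p] even_row[of p] by (cases "p \<in> S") auto
  qed
  moreover have "[(D ** A)$k$k = 1] (mod 2)"
    using DA[unfolded mat_cong_def, rule_format, of k k] by (simp add: mat_def)
  ultimately show False
    by (simp add: cong_iff_dvd_diff)
qed

lemma make_pivot_odd_mod2:
  assumes DA: "mat_cong 2 (D ** A) (mat 1)"
    and unit: "\<And>j. j \<notin> S \<Longrightarrow> unit_column_mod2 A j" and k: "k \<in> S"
  shows "\<exists>E. invertible E \<and> odd ((E ** A)$k$k) \<and>
    (\<forall>j. j \<notin> S \<longrightarrow> unit_column_mod2 (E ** A) j)"
proof -
  obtain l where l: "l \<in> S" "odd (A$l$k)"
    using exists_odd_pivot_mod2[OF DA unit k] by blast
  define c :: "_ \<Rightarrow> int" where "c i = (if i = k \<and> even (A$k$k) then 1 else 0)" for i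
  have "c l = 0"
    using l by (auto simp: c_def)
  moreover have "odd ((transvection c l ** A)$k$k)"
    using l by (simp add: transvection_mult_nth c_def)
  moreover have "unit_column_mod2 (transvection c l ** A) j" if "j \<notin> S" for j
    using unit[OF that] l that by (auto simp: unit_column_mod2_def transvection_mult_nth c_def)
  ultimately show ?thesis
    using invertible_transvection by blast
qed

lemma clear_column_mod2:
  assumes "odd (A$k$k)"
  shows "\<exists>E. invertible E \<and> unit_column_mod2 (E ** A) k \<and>
    (\<forall>j. j \<noteq> k \<longrightarrow> unit_column_mod2 A j \<longrightarrow> unit_column_mod2 (E ** A) j)"
proof -
  define c :: "_ \<Rightarrow> int" where "c i = (if i = k then 0 else - A$i$k)" for i
  have "unit_column_mod2 (transvection c k ** A) k"
    using assms by (auto simp: unit_column_mod2_def transvection_mult_nth c_def)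
  moreover have "unit_column_mod2 (transvection c k ** A) j" if "j \<noteq> k" "unit_column_mod2 A j" for j
    using that by (auto simp: unit_column_mod2_def transvection_mult_nth c_def)
  moreover have "invertible (transvection c k)"
    by (simp add: invertible_transvection c_def)
  ultimately show ?thesis
    by blast
qed

(* Gaussian elimination, by induction on the set of columns not yet congruent to unit vectors. *)
lemma lift_invertible_mod2:
  fixes A D :: "int^'n::finite^'n"
  assumes "mat_cong 2 (D ** A) (mat 1)"
  shows "\<exists>U. invertible U \<and> mat_cong 2 U A"
proof -
  have "\<exists>U. invertible U \<and> mat_cong 2 U A"
    if "finite S" "mat_cong 2 (D ** A) (mat 1)" "\<And>j. j \<notin> S \<Longrightarrow> unit_column_mod2 A j"
    for S and A D :: "int^'n^'n"
    using that
  proof (induction S arbitrary: A D rule: finite_induct)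
    case empty
    then have "mat_cong 2 (mat 1) A"
      by (simp add: mat_cong_sym mat_cong_2_one_iff_unit_columns)
    moreover have "invertible (mat 1 :: int^'n^'n)"
      by (auto simp: invertible_def)
    ultimately show ?case
      by blast
  next
    case (insert k S)
    obtain E1 where E1: "invertible E1" "odd ((E1 ** A)$k$k)"
      "\<And>j. j \<notin> insert k S \<Longrightarrow> unit_column_mod2 (E1 ** A) j"
      using make_pivot_odd_mod2[OF insert.prems] by blast
    obtain E2 where E2: "invertible E2" "unit_column_mod2 (E2 ** (E1 ** A)) k"
      "\<And>j. j \<noteq> k \<Longrightarrow> unit_column_mod2 (E1 ** A) j \<Longrightarrow>
        unit_column_mod2 (E2 ** (E1 ** A)) j"
      using clear_column_mod2[OF E1(2)] by blast
    define E where "E = E2 ** E1"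
    have E: "invertible E"
      by (simp add: E_def E1(1) E2(1) invertible_mult)
    have "unit_column_mod2 (E ** A) j" if "j \<notin> S" for j
      using E1(3) E2(2,3) that by (cases "j = k") (auto simp: E_def matrix_mul_assoc)
    moreover have "(D ** matrix_inv E) ** (E ** A) = D ** A"
      by (metis E matrix_inv_left matrix_mul_assoc matrix_mul_rid)
    ultimately obtain U where U: "invertible U" "mat_cong 2 U (E ** A)"
      using insert.IH insert.prems(1) by metis
    have "invertible (matrix_inv E ** U)"
      by (simp add: E U(1) invertible_matrix_inv invertible_mult)
    moreover have "mat_cong 2 (matrix_inv E ** U) (matrix_inv E ** (E ** A))"
      by (simp add: U(2) mat_cong_mult)
    ultimately show ?case
      by (metis E matrix_inv_left matrix_mul_assoc matrix_mul_lid)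
  qed
  from this[OF finite[of UNIV] assms] show ?thesis
    by simp
qed

section \<open>Block matrices\<close>

definition block :: "'a^'n^'n \<Rightarrow> 'a^'n^'n \<Rightarrow> 'a^'n^'n \<Rightarrow> 'a^'n^'n \<Rightarrow> 'a^('n + 'n)^('n + 'n)"
  where "block A B C D = (\<chi> i j. case (i, j) of
      (Inl a, Inl b) \<Rightarrow> A$a$b | (Inl a, Inr b) \<Rightarrow> B$a$b
    | (Inr a, Inl b) \<Rightarrow> C$a$b | (Inr a, Inr b) \<Rightarrow> D$a$b)"

lemma block_nth [simp]:
  "block A B C D $ Inl a $ Inl b = A$a$b" "block A B C D $ Inl a $ Inr b = B$a$b"
  "block A B C D $ Inr a $ Inl b = C$a$b" "block A B C D $ Inr a $ Inr b = D$a$b"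
  by (simp_all add: block_def)

lemma block_cases:
  obtains A B C D where "M = block A B C D"
proof
  show "M = block (\<chi> a b. M $ Inl a $ Inl b) (\<chi> a b. M $ Inl a $ Inr b)
                  (\<chi> a b. M $ Inr a $ Inl b) (\<chi> a b. M $ Inr a $ Inr b)"
    unfolding vec_eq_iff by (auto simp: block_def split: sum.split)
qed

lemma block_eq_iff:
  "block A B C D = block A' B' C' D' \<longleftrightarrow> A = A' \<and> B = B' \<and> C = C' \<and> D = D'"
  by (auto simp: vec_eq_iff block_def split_sum_all)

lemma sum_UNIV_Plus:
  "sum f (UNIV :: ('a::finite + 'b::finite) set) = sum (f \<circ> Inl) UNIV + sum (f \<circ> Inr) UNIV"
  by (simp flip: UNIV_Plus_UNIV add: sum.Plus)

lemma block_mult: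
  fixes A B C D A' B' C' D' :: "'a::semiring_1^'n::finite^'n"
  shows "block A B C D ** block A' B' C' D' =
    block (A ** A' + B ** C') (A ** B' + B ** D') (C ** A' + D ** C') (C ** B' + D ** D')"
  by (auto simp: vec_eq_iff split_sum_all matrix_matrix_mult_def sum_UNIV_Plus sum.distrib)

lemma transpose_block:
  "transpose (block A B C D) = block (transpose A) (transpose C) (transpose B) (transpose D)"
  by (auto simp: vec_eq_iff split_sum_all transpose_def)

lemma uminus_block: "- block A B C D = block (- A) (- B) (- C) (- D)"
  by (auto simp: vec_eq_iff split_sum_all)

lemma mat_one_block: "mat 1 = block (mat 1) 0 0 (mat 1)"
  by (auto simp: vec_eq_iff split_sum_all mat_def)

lemma mat_cong_block_iff:
  "mat_cong N (block A B C D) (block A' B' C' D') \<longleftrightarrow>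
    mat_cong N A A' \<and> mat_cong N B B' \<and> mat_cong N C C' \<and> mat_cong N D D'"
  by (auto simp: mat_cong_def split_sum_all)

lemma Jmat_block: "Jmat = block 0 (mat 1) (- mat 1) 0"
  by (auto simp: vec_eq_iff split_sum_all Jmat_def mat_def)

lemma tau_block: "tau (block A B C D) = block A (- B) (- C) D"
  by (auto simp: vec_eq_iff split_sum_all tau_def)

lemma embGL_block: "embGL U = block U 0 0 (transpose (matrix_inv U))"
  by (auto simp: vec_eq_iff split_sum_all embGL_def)

lemma Gamma2_block_iff:
  "block A B C D \<in> Gamma2 m \<longleftrightarrow> block A B C D \<in> Sp \<and>
     mat_cong 2 A (mat 1) \<and> mat_cong 2 D (mat 1) \<and> mat_cong (2 * m) B 0 \<and> mat_cong (2 * m) C 0"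
  by (auto simp: Gamma2_def mat_cong_def split_sum_all mat_def)

lemma Jmat_mult_Jmat: "Jmat ** Jmat = - mat 1"
  by (simp add: Jmat_block block_mult uminus_block mat_one_block)

lemma Sp_left_inverse:
  assumes "g \<in> Sp"
  shows "- (Jmat ** transpose g ** Jmat) ** g = mat 1"
proof -
  have "- (Jmat ** transpose g ** Jmat) ** g = - (Jmat ** (transpose g ** Jmat ** g))"
    by (simp add: matrix_mul_assoc)
  also have "\<dots> = mat 1"
    using assms by (simp add: Sp_def Jmat_mult_Jmat)
  finally show ?thesis .
qed

lemma invertible_Sp: "g \<in> Sp \<Longrightarrow> invertible g"
  using Sp_left_inverse invertible_int_matrix_iff by blast

lemma Sp_mult:
  assumes "g \<in> Sp" "h \<in> Sp"
  shows "g ** h \<in> Sp"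
proof -
  have "transpose (g ** h) ** Jmat ** (g ** h) = transpose h ** (transpose g ** Jmat ** g) ** h"
    by (simp add: matrix_transpose_mul matrix_mul_assoc)
  then show ?thesis
    using assms by (simp add: Sp_def)
qed

lemma Sp_matrix_inv:
  assumes "g \<in> Sp"
  shows "matrix_inv g \<in> Sp"
proof -
  let ?h = "matrix_inv g"
  have gh: "g ** ?h = mat 1"
    using assms invertible_Sp matrix_inv_right by blast
  have "transpose ?h ** Jmat ** ?h = transpose ?h ** (transpose g ** Jmat ** g) ** ?h"
    using assms by (simp add: Sp_def)
  also have "\<dots> = transpose (g ** ?h) ** Jmat ** (g ** ?h)"
    by (simp add: matrix_transpose_mul matrix_mul_assoc)
  finally show ?thesis
    by (simp add: Sp_def gh)
qed

lemma tau_Sp: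
  fixes g :: "'n::finite smat"
  assumes "g \<in> Sp"
  shows "tau g \<in> Sp"
proof -
  define K :: "'n smat" where "K = block (mat 1) 0 0 (- mat 1)"
  have tau: "tau g = K ** g ** K"
    by (cases g rule: block_cases) (simp add: K_def block_mult tau_block)
  have K: "transpose K = K" "K ** Jmat ** K = - Jmat"
    by (simp_all add: K_def transpose_block Jmat_block block_mult uminus_block)
  have "transpose (tau g) ** Jmat ** tau g = (K ** transpose g) ** (K ** Jmat ** K) ** (g ** K)"
    by (simp add: tau K(1) matrix_transpose_mul matrix_mul_assoc)
  also have "\<dots> = - (K ** (transpose g ** Jmat ** g) ** K)"
    unfolding K(2) by (simp add: matrix_mul_assoc)
  also have "\<dots> = Jmat"
    using assms K by (simp add: Sp_def)
  finally show ?thesis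
    by (simp add: Sp_def)
qed

lemma block_diag_Sp:
  assumes "Q ** P = mat 1"
  shows "block P 0 0 (transpose Q) \<in> Sp"
proof -
  have "transpose P ** transpose Q = mat 1"
    using assms by (metis matrix_transpose_mul transpose_mat)
  then show ?thesis
    using assms by (simp add: Sp_def Jmat_block transpose_block block_mult)
qed

lemma Sp_block_lower_left:
  assumes "block A B C D \<in> Sp"
  shows "transpose D ** A - transpose B ** C = mat 1"
proof -
  have "transpose (block A B C D) ** Jmat ** block A B C D = Jmat"
    using assms by (simp add: Sp_def)
  then have "- (transpose D ** A) + transpose B ** C = - mat 1"
    by (simp add: Jmat_block transpose_block block_mult block_eq_iff matrix_mul_assoc)
  then show ?thesis
    by (simp add: algebra_simps)
qed

section \<open>Congruence subgroups\<close>

lemma Gamma_iff: "g \<in> Gamma N \<longleftrightarrow> g \<in> Sp \<and> mat_cong N g (mat 1)"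
  by (simp add: Gamma_def mat_cong_def)

lemma mat_cong_tau_iff:
  "mat_cong (2 * N) (tau (block A B C D)) (block A B C D) \<longleftrightarrow>
    mat_cong N B 0 \<and> mat_cong N C 0"
  by (simp add: tau_block mat_cong_block_iff mat_cong_uminus_self_iff)

lemma mat_cong_tau_if_mat_cong_one:
  assumes "mat_cong N g (mat 1)"
  shows "mat_cong (2 * N) (tau g) g"
proof -
  obtain A B C D where g: "g = block A B C D"
    by (rule block_cases)
  then show ?thesis
    using assms by (simp add: mat_cong_tau_iff mat_one_block mat_cong_block_iff)
qed

lemma mat_cong_square_one:
  assumes "mat_cong (2 * m) g (mat 1)"
  shows "mat_cong (4 * m) (g ** g) (mat 1)"
proof -
  define P where "P = g - mat 1"
  have P: "mat_cong (2 * m) P 0"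
    using mat_cong_diff[OF assms mat_cong_refl, of "mat 1"] by (simp add: P_def)
  have "g = mat 1 + P"
    by (simp add: P_def)
  then have "g ** g = mat 1 + (P + P) + P ** P"
    by (simp only: matrix_add_ldistrib matrix_add_rdistrib matrix_mul_lid matrix_mul_rid add.assoc)
  moreover have "mat_cong (4 * m) (P + P) 0"
    unfolding mat_cong_0_iff
  proof (intro allI)
    fix i j
    obtain k where "P$i$j = 2 * m * k"
      using P unfolding mat_cong_0_iff by (meson dvdE)
    then show "4 * m dvd (P + P)$i$j"
      by (simp add: algebra_simps)
  qed
  moreover have "mat_cong (4 * m) (P ** P) 0"
    using mat_cong_0_mult[OF P P] by (rule mat_cong_dvd_modulus) simp
  ultimately show ?thesis
    using mat_cong_add by (metis add.right_neutral mat_cong_refl)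
qed

lemma tau_mult_matrix_inv_Gamma:
  assumes "g \<in> Gamma m"
  shows "tau g ** matrix_inv g \<in> Gamma (2 * m)"
proof -
  have Sp: "g \<in> Sp" and "mat_cong m g (mat 1)"
    using assms by (simp_all add: Gamma_iff)
  then have "mat_cong (2 * m) (tau g ** matrix_inv g) (g ** matrix_inv g)"
    by (simp add: mat_cong_mult mat_cong_tau_if_mat_cong_one)
  moreover have "tau g ** matrix_inv g \<in> Sp"
    by (simp add: Sp Sp_mult tau_Sp Sp_matrix_inv)
  ultimately show ?thesis
    using Sp by (simp add: Gamma_iff matrix_inv_right invertible_Sp)
qed

lemma tau_mult_Gamma:
  assumes "g \<in> Gamma (2 * m)"
  shows "tau g ** g \<in> Gamma (4 * m)"
proof -
  have Sp: "g \<in> Sp" and g: "mat_cong (2 * m) g (mat 1)"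
    using assms by (simp_all add: Gamma_iff)
  then have "mat_cong (4 * m) (tau g ** g) (g ** g)"
    using mat_cong_tau_if_mat_cong_one[OF g] by (simp add: mat_cong_mult)
  also have "mat_cong (4 * m) (g ** g) (mat 1)"
    using g by (rule mat_cong_square_one)
  finally show ?thesis
    by (simp add: Gamma_iff Sp Sp_mult tau_Sp)
qed

lemma lift_block_diag_mod2:
  fixes A D :: "int^'n::finite^'n"
  assumes DA: "mat_cong 2 (transpose D ** A) (mat 1)"
  shows "\<exists>u. invertible u \<and> mat_cong 2 (A ** matrix_inv u) (mat 1) \<and>
    mat_cong 2 (D ** transpose u) (mat 1)"
proof -
  obtain u where u: "invertible u" "mat_cong 2 u A"
    using lift_invertible_mod2[OF DA] by blast
  define v where "v = matrix_inv u"
  have uv: "u ** v = mat 1" "v ** u = mat 1"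
    using u(1) by (simp_all add: v_def matrix_inv_left matrix_inv_right)
  have "mat_cong 2 (A ** v) (u ** v)"
    using u(2) by (simp add: mat_cong_mult mat_cong_sym)
  moreover have "mat_cong 2 (transpose D) v"
  proof -
    have "transpose D = (transpose D ** u) ** v"
      by (simp add: uv flip: matrix_mul_assoc)
    also have "mat_cong 2 \<dots> ((transpose D ** A) ** v)"
      using u(2) by (simp add: mat_cong_mult)
    also have "mat_cong 2 \<dots> (mat 1 ** v)"
      using mat_cong_mult[OF DA mat_cong_refl] .
    finally show ?thesis
      by simp
  qed
  then have "mat_cong 2 (transpose (u ** transpose D)) (transpose (u ** v))"
    unfolding mat_cong_transpose by (simp add: mat_cong_mult)
  then have "mat_cong 2 (D ** transpose u) (mat 1)"
    by (simp add: matrix_transpose_mul uv)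
  ultimately show ?thesis
    using u(1) uv by (auto simp: v_def)
qed

lemma Gamma2_GLZ_decomposition:
  assumes Sp: "block A B C D \<in> Sp" and B: "mat_cong (2 * m) B 0" and C: "mat_cong (2 * m) C 0"
  shows "\<exists>\<beta>\<in>Gamma2 m. \<exists>u\<in>GLZ. block A B C D = \<beta> ** embGL u"
proof -
  have "mat_cong 2 (transpose D ** A - transpose B ** C) (transpose D ** A - transpose B ** 0)"
    using mat_cong_dvd_modulus[OF C] by (intro mat_cong_diff mat_cong_mult) auto
  then have "mat_cong 2 (transpose D ** A) (mat 1)"
    using Sp_block_lower_left[OF Sp] by (simp add: mat_cong_sym)
  then obtain u where u: "invertible u" "mat_cong 2 (A ** matrix_inv u) (mat 1)"
    "mat_cong 2 (D ** transpose u) (mat 1)"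
    using lift_block_diag_mod2 by blast
  define F where "F = block (matrix_inv u) 0 0 (transpose u)"
  define \<beta> where "\<beta> = block A B C D ** F"
  have "\<beta> \<in> Sp"
    by (simp add: \<beta>_def F_def Sp Sp_mult block_diag_Sp matrix_inv_right u(1))
  moreover have
    "\<beta> = block (A ** matrix_inv u) (B ** transpose u) (C ** matrix_inv u) (D ** transpose u)"
    by (simp add: \<beta>_def F_def block_mult)
  moreover have "mat_cong (2 * m) (B ** transpose u) 0" "mat_cong (2 * m) (C ** matrix_inv u) 0"
    using mat_cong_mult[OF B mat_cong_refl] mat_cong_mult[OF C mat_cong_refl] by auto
  ultimately have "\<beta> \<in> Gamma2 m"
    using u by (simp add: Gamma2_block_iff)
  moreover have "F ** embGL u = mat 1"
    by (simp add: F_def embGL_block block_mult matrix_inv_left u(1)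
        flip: matrix_transpose_mul mat_one_block)
  then have "block A B C D = \<beta> ** embGL u"
    by (simp add: \<beta>_def flip: matrix_mul_assoc)
  moreover have "u \<in> GLZ"
    by (simp add: GLZ_def u(1))
  ultimately show ?thesis
    by blast
qed

lemma tau_mult_matrix_inv_Gamma_decomposition:
  assumes Sp: "g \<in> Sp" and "tau g ** matrix_inv g \<in> Gamma (4 * m)"
  shows "\<exists>\<beta>\<in>Gamma2 m. \<exists>u\<in>GLZ. g = \<beta> ** embGL u"
proof -
  obtain A B C D where g: "g = block A B C D"
    by (rule block_cases)
  have "mat_cong (4 * m) (tau g ** matrix_inv g ** g) (mat 1 ** g)"
    using assms(2) unfolding Gamma_iff by (blast intro: mat_cong_mult mat_cong_refl)
  then have "mat_cong (2 * (2 * m)) (tau g) g"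
    using Sp by (simp add: matrix_inv_left invertible_Sp flip: matrix_mul_assoc)
  then have "mat_cong (2 * m) B 0" "mat_cong (2 * m) C 0"
    using mat_cong_tau_iff[of "2 * m" A B C D] by (simp_all add: g)
  then show ?thesis
    using Gamma2_GLZ_decomposition Sp g by blast
qed

theorem lemma4p5:
  fixes g :: "'n::finite smat" and m :: int
  assumes "g \<in> Sp" and "m \<ge> 1"
  shows "(g \<in> Gamma m \<longrightarrow> tau g ** matrix_inv g \<in> Gamma (2 * m))
       \<and> (g \<in> Gamma (2 * m) \<longrightarrow> tau g ** g \<in> Gamma (4 * m))
       \<and> (tau g ** matrix_inv g \<in> Gamma (4 * m) \<longrightarrow>
            (\<exists>\<beta> \<in> Gamma2 m. \<exists>u \<in> GLZ. g = \<beta> ** embGL u))"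
  using tau_mult_matrix_inv_Gamma tau_mult_Gamma
    tau_mult_matrix_inv_Gamma_decomposition[OF \<open>g \<in> Sp\<close>] by blast

end
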